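(* Let $m$ be a positive integer and $\theta_1,\dots,\theta_{2m}$ pairwise distinct numbers in $(0,\pi)$ with $\theta_{2m+1-i}=\pi-\theta_i$ for $i=1,\dots,m$. For $\alpha\in\{0,1\}$ let $\phi_j^\alpha=(2j+\alpha)\pi/(2m)$, and for $i=1,\dots,2m$ let $$w_i=\int_{-1}^1\prod_{k=1,k\ne i}^{2m}\frac{t-\cos\theta_k}{\cos\theta_i-\cos\theta_k}\,dt.$$ Then for every $T\in\Pi_{2m-1}(\mathbb{S}^2)$, $$\int_{\mathbb{S}^2}T(\xi)\,d\omega(\xi)=\frac{\pi}{m}\sum_{i=1}^m w_i\sum_{j=0}^{2m-1}\widetilde T(\theta_i,\phi_j^0)+\frac{\pi}{m}\sum_{i=m+1}^{2m}w_i\sum_{j=0}^{2m-1}\widetilde T(\theta_i,\phi_j^1).$$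
   Context: $\mathbb{S}^2$ is the unit sphere in $\mathbb{R}^3$ and $d\omega$ its surface area measure, so that $\int_{\mathbb{S}^2}T\,d\omega=\int_0^\pi\int_0^{2\pi}\widetilde T(\theta,\phi)\sin\theta\,d\phi\,d\theta$. $\Pi_n(\mathbb{S}^2)$ is the space of restrictions to $\mathbb{S}^2$ of real polynomials in $x,y,z$ of total degree at most $n$, and $\widetilde T(\theta,\phi)=T(\sin\theta\cos\phi,\sin\theta\sin\phi,\cos\theta)$. *)

theory Defs
  imports "HOL-Analysis.Analysis"
begin

definition sphere_poly :: "nat \<Rightarrow> (real \<Rightarrow> real \<Rightarrow> real \<Rightarrow> real) \<Rightarrow> bool" where
  "sphere_poly n T \<longleftrightarrow>
     (\<exists>c :: nat \<Rightarrow> nat \<Rightarrow> nat \<Rightarrow> real. \<forall>x y z. x\<^sup>2 + y\<^sup>2 + z\<^sup>2 = 1 \<longrightarrow>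
        T x y z = (\<Sum>(a, b, d) \<in> {(a, b, d). a + b + d \<le> n}. c a b d * x ^ a * y ^ b * z ^ d))"

definition sph :: "(real \<Rightarrow> real \<Rightarrow> real \<Rightarrow> real) \<Rightarrow> real \<Rightarrow> real \<Rightarrow> real" where
  "sph T \<theta> \<phi> = T (sin \<theta> * cos \<phi>) (sin \<theta> * sin \<phi>) (cos \<theta>)"

definition sphere_integral :: "(real \<Rightarrow> real \<Rightarrow> real \<Rightarrow> real) \<Rightarrow> real" where
  "sphere_integral T = integral {0..pi} (\<lambda>\<theta>. integral {0..2*pi} (\<lambda>\<phi>. sph T \<theta> \<phi> * sin \<theta>))"

end

theory Submission
  imports Defs "HOL-Computational_Algebra.Polynomial"
begin

text \<open>For fixed \<open>\<theta>\<close>, \<open>\<phi> \<mapsto> T~(\<theta>, \<phi>)\<close> is a combination of the monomials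
  \<open>cos\<^sup>a \<phi> sin\<^sup>b \<phi>\<close> with \<open>a + b < 2m\<close>, i.e. of \<open>cis (k \<phi>)\<close> with \<open>|k| < 2m\<close>. Since
  \<open>\<Sum>\<^sub>j\<^sub><\<^sub>2\<^sub>m cis (2 \<pi> j k / 2m) = 0\<close> for \<open>0 < |k| < 2m\<close>, the \<open>2m\<close>-point equispaced rule integrates such functions exactly over \<open>[0, 2\<pi>]\<close>, whatever its offset; this
  covers both node families \<open>\<phi>\<^sup>0\<close> and \<open>\<phi>\<^sup>1\<close>. The monomials with \<open>a + b\<close> odd integrate
  to zero, so only even powers of \<open>sin \<theta>\<close> remain and the \<open>\<phi>\<close>-integral is \<open>p (cos \<theta>)\<close>
  for a polynomial \<open>p\<close> of degree \<open>< 2m\<close>. Substituting \<open>t = cos \<theta>\<close> turns the surface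
  integral into \<open>\<integral>\<^sub>-\<^sub>1\<^sup>1 p\<close>, which the interpolatory rule with the \<open>2m\<close> distinct
  nodes \<open>cos \<theta>\<^sub>i\<close> and weights \<open>w\<^sub>i\<close> computes exactly.\<close>

lemma has_integral_cis_int_multiple:
  fixes k :: int
  assumes "k \<noteq> 0"
  shows "((\<lambda>x. cis (of_int k * x)) has_integral 0) {0..2*pi}"
proof -
  have "((\<lambda>x. cis (of_int k * x)) has_integral
          cis (of_int k * (2*pi)) / (\<i> * of_int k) - cis (of_int k * 0) / (\<i> * of_int k)) {0..2*pi}"
  proof (rule fundamental_theorem_of_calculus)
    fix x :: real
    show "((\<lambda>x. cis (of_int k * x) / (\<i> * of_int k)) has_vector_derivative cis (of_int k * x))
            (at x within {0..2*pi})"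
      using assms unfolding has_vector_derivative_def
      by (auto intro!: derivative_eq_intros simp: scaleR_conv_of_real field_simps)
  qed simp
  moreover have "cis (of_int k * (2*pi)) = 1"
    by (metis cis_multiple_2pi Ints_of_int mult.commute)
  ultimately show ?thesis by simp
qed

lemma sum_cis_equispaced_eq_0:
  fixes k :: int
  assumes "k \<noteq> 0" "\<bar>k\<bar> < int N"
  shows "(\<Sum>j<N. cis (of_int k * (s + 2*pi*real j/N))) = 0"
proof -
  define w where "w = cis (2*pi*k/N)"
  have "w \<noteq> 1"
  proof
    assume "w = 1"
    then obtain n :: int where "2*pi*k/N = 2*pi*n"
      by (auto simp: w_def complex_eq_iff cos_one_2pi_int)
    with assms have "k = n * int N"
      by (simp add: field_simps) (metis of_int_eq_iff of_int_mult of_int_of_nat_eq)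
    then have "\<bar>k\<bar> = \<bar>n\<bar> * int N"
      by (simp add: abs_mult)
    moreover from this assms have "1 \<le> \<bar>n\<bar>"
      by (cases "n = 0") auto
    ultimately show False
      using assms(2) mult_right_mono[of 1 "\<bar>n\<bar>" "int N"] by simp
  qed
  have "w ^ N = 1"
    using assms cis_multiple_2pi[of "of_int k"] unfolding w_def Complex.DeMoivre by simp
  have "(\<Sum>j<N. cis (of_int k * (s + 2*pi*real j/N))) = cis (of_int k * s) * (\<Sum>j<N. w ^ j)"
    unfolding sum_distrib_left w_def Complex.DeMoivre cis_mult
    by (intro sum.cong refl arg_cong[where f = cis]) (simp add: algebra_simps)
  also have "\<dots> = 0"
    using \<open>w \<noteq> 1\<close> \<open>w ^ N = 1\<close> by (simp add: sum_gp_strict)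
  finally show ?thesis .
qed

lemma equispaced_rule_exact_cis:
  fixes k :: int
  assumes "\<bar>k\<bar> < int N"
  shows "((\<lambda>x. cis (of_int k * x)) has_integral
           2*pi/N * (\<Sum>j<N. cis (of_int k * (s + 2*pi*real j/N)))) {0..2*pi}"
proof (cases "k = 0")
  case True
  have "((\<lambda>x. 1) has_integral (2*pi) *\<^sub>R (1 :: complex)) {0..2*pi}"
    using has_integral_const_real[of "1 :: complex" 0 "2*pi"] by simp
  with True assms show ?thesis
    by (simp add: scaleR_conv_of_real)
next
  case False
  then show ?thesis
    using assms has_integral_cis_int_multiple sum_cis_equispaced_eq_0 by simp
qed

lemma equispaced_rule_exact_trig_poly:
  fixes freq :: "'i \<Rightarrow> int" and c :: "'i \<Rightarrow> complex"
  assumes "finite I" "\<forall>i\<in>I. \<bar>freq i\<bar> < int N"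
  shows "((\<lambda>x. \<Sum>i\<in>I. c i * cis (of_int (freq i) * x)) has_integral
           2*pi/N * (\<Sum>j<N. \<Sum>i\<in>I. c i * cis (of_int (freq i) * (s + 2*pi*real j/N)))) {0..2*pi}"
proof -
  have "((\<lambda>x. \<Sum>i\<in>I. c i * cis (of_int (freq i) * x)) has_integral
          (\<Sum>i\<in>I. c i * (2*pi/N * (\<Sum>j<N. cis (of_int (freq i) * (s + 2*pi*real j/N)))))) {0..2*pi}"
    using assms by (intro has_integral_sum has_integral_mult_right equispaced_rule_exact_cis) auto
  also have "(\<Sum>i\<in>I. c i * (2*pi/N * (\<Sum>j<N. cis (of_int (freq i) * (s + 2*pi*real j/N)))))
      = 2*pi/N * (\<Sum>j<N. \<Sum>i\<in>I. c i * cis (of_int (freq i) * (s + 2*pi*real j/N)))"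
    by (simp add: sum_distrib_left mult_ac sum.swap[of _ I])
  finally show ?thesis .
qed

lemma has_integral_trig_poly_without_constant_term:
  fixes freq :: "'i \<Rightarrow> int" and c :: "'i \<Rightarrow> complex"
  assumes "finite I" "\<forall>i\<in>I. freq i \<noteq> 0"
  shows "((\<lambda>x. \<Sum>i\<in>I. c i * cis (of_int (freq i) * x)) has_integral 0) {0..2*pi}"
proof -
  have "((\<lambda>x. \<Sum>i\<in>I. c i * cis (of_int (freq i) * x)) has_integral (\<Sum>i\<in>I. c i * 0)) {0..2*pi}"
    using assms by (intro has_integral_sum has_integral_mult_right has_integral_cis_int_multiple) auto
  then show ?thesis by simp
qed

lemma cis_plus_scaled_cis_minus_power:
  "(cis x + z * cis (-x)) ^ n =
     (\<Sum>p\<le>n. of_nat (n choose p) * z ^ (n - p) * cis (of_int (2 * int p - int n) * x))"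
proof -
  have "cis x ^ p * (z * cis (-x)) ^ (n - p) = z ^ (n - p) * cis (of_int (2 * int p - int n) * x)"
    if "p \<le> n" for p
  proof -
    have "real p * x + real (n - p) * (-x) = of_int (2 * int p - int n) * x"
      using that by (simp add: of_nat_diff algebra_simps)
    then show ?thesis
      by (simp add: power_mult_distrib Complex.DeMoivre cis_mult)
  qed
  then show ?thesis
    unfolding binomial_ring by (intro sum.cong refl) (simp add: mult_ac)
qed

lemma cos_power_mult_sin_power_trig_poly:
  "\<exists>c. \<forall>x. complex_of_real (cos x ^ a * sin x ^ b) =
     (\<Sum>i\<in>{..a} \<times> {..b}. c i * cis (of_int (2 * int (fst i) + 2 * int (snd i) - int (a + b)) * x))"
proof -
  define c where "c i = of_nat (a choose fst i) * of_nat (b choose snd i) * (-1) ^ (b - snd i)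
    / (2 ^ a * (2 * \<i>) ^ b)" for i :: "nat \<times> nat"
  have "complex_of_real (cos x ^ a * sin x ^ b) =
     (\<Sum>i\<in>{..a} \<times> {..b}. c i * cis (of_int (2 * int (fst i) + 2 * int (snd i) - int (a + b)) * x))" for x
  proof -
    have "complex_of_real (cos x) = (cis x + 1 * cis (-x)) / 2"
      by (simp add: complex_eq_iff)
    moreover have "cis x + (-1) * cis (-x) = 2 * \<i> * complex_of_real (sin x)"
      by (simp add: complex_eq_iff)
    then have "complex_of_real (sin x) = (cis x + (-1) * cis (-x)) / (2 * \<i>)"
      by simp
    ultimately have "complex_of_real (cos x ^ a * sin x ^ b) =
        (cis x + 1 * cis (-x)) ^ a * (cis x + (-1) * cis (-x)) ^ b / (2 ^ a * (2 * \<i>) ^ b)"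
      by (simp only: of_real_mult of_real_power power_divide times_divide_times_eq)
    also have "\<dots> = (\<Sum>i\<in>{..a} \<times> {..b}. c i * cis (of_int (2 * int (fst i) + 2 * int (snd i) - int (a + b)) * x))"
      unfolding cis_plus_scaled_cis_minus_power sum_product sum.cartesian_product sum_divide_distrib
      by (intro sum.cong refl) (auto simp: c_def cis_mult algebra_simps)
    finally show ?thesis .
  qed
  then show ?thesis by blast
qed

lemma cos_power_mult_sin_power_equispaced_rule:
  assumes "a + b < N"
  shows "((\<lambda>x. cos x ^ a * sin x ^ b) has_integral
           2*pi/N * (\<Sum>j<N. cos (s + 2*pi*real j/N) ^ a * sin (s + 2*pi*real j/N) ^ b)) {0..2*pi}"
proof -
  obtain c where c: "\<And>x. complex_of_real (cos x ^ a * sin x ^ b) =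
     (\<Sum>i\<in>{..a} \<times> {..b}. c i * cis (of_int (2 * int (fst i) + 2 * int (snd i) - int (a + b)) * x))"
    using cos_power_mult_sin_power_trig_poly by blast
  have "((\<lambda>x. complex_of_real (cos x ^ a * sin x ^ b)) has_integral
          2*pi/N * (\<Sum>j<N. complex_of_real (cos (s + 2*pi*real j/N) ^ a * sin (s + 2*pi*real j/N) ^ b)))
          {0..2*pi}"
    unfolding c using assms by (intro equispaced_rule_exact_trig_poly) auto
  from has_integral_Re[OF this] show ?thesis
    by simp
qed

lemma cos_power_mult_sin_power_integral_odd:
  assumes "odd (a + b)"
  shows "((\<lambda>x. cos x ^ a * sin x ^ b) has_integral 0) {0..2*pi}"
proof -
  obtain c where c: "\<And>x. complex_of_real (cos x ^ a * sin x ^ b) =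
     (\<Sum>i\<in>{..a} \<times> {..b}. c i * cis (of_int (2 * int (fst i) + 2 * int (snd i) - int (a + b)) * x))"
    using cos_power_mult_sin_power_trig_poly by blast
  have "2 * int p + 2 * int q - int (a + b) \<noteq> 0" for p q
    using assms by presburger
  then have "((\<lambda>x. complex_of_real (cos x ^ a * sin x ^ b)) has_integral 0) {0..2*pi}"
    unfolding c by (intro has_integral_trig_poly_without_constant_term) auto
  from has_integral_Re[OF this] show ?thesis
    by simp
qed

lemma lagrange_interpolation:
  fixes t :: "'i \<Rightarrow> 'a :: field" and P :: "'a poly"
  assumes "finite A" "inj_on t A" "degree P < card A"
  shows "poly P x = (\<Sum>i\<in>A. poly P (t i) * (\<Prod>k\<in>A - {i}. (x - t k) / (t i - t k)))"
proof -
  define L where "L i = (\<Prod>k\<in>A - {i}. smult (1 / (t i - t k)) [:- t k, 1:])" for i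
  have poly_L: "poly (L i) y = (\<Prod>k\<in>A - {i}. (y - t k) / (t i - t k))" for i y
    unfolding L_def poly_prod by (intro prod.cong refl) (simp add: diff_divide_distrib)
  have degree_L: "degree (L i) \<le> card A - 1" if "i \<in> A" for i
  proof -
    have "degree (L i) \<le> (\<Sum>k\<in>A - {i}. degree (smult (1 / (t i - t k)) [:- t k, 1:]))"
      unfolding L_def using degree_prod_sum_le[OF finite_Diff[OF assms(1)]] by (simp only: o_def)
    also have "\<dots> \<le> (\<Sum>k\<in>A - {i}. 1)"
      by (intro sum_mono) (simp add: degree_smult_le)
    finally show ?thesis
      using that assms(1) by simp
  qed
  have L_at_node: "poly (L i) (t j) = (if i = j then 1 else 0)" if "i \<in> A" "j \<in> A" for i j
    using that assms(1,2) unfolding poly_L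
    by (auto intro!: prod.neutral prod_zero dest: inj_onD split: if_splits)
  define Q where "Q = (\<Sum>i\<in>A. smult (poly P (t i)) (L i))"
  have "degree Q \<le> card A - 1"
    unfolding Q_def using degree_L by (intro degree_sum_le assms(1)) (auto intro: order.trans[OF degree_smult_le])
  moreover have "poly Q (t j) = poly P (t j)" if "j \<in> A" for j
  proof -
    have "poly Q (t j) = (\<Sum>i\<in>A. if i = j then poly P (t i) else 0)"
      unfolding Q_def poly_sum poly_smult using that by (intro sum.cong refl) (simp add: L_at_node)
    then show ?thesis
      using that assms(1) by simp
  qed
  ultimately have "P = Q"
    using assms by (intro poly_eqI_degree[of "t ` A"]) (auto simp: card_image)
  then have "poly P x = poly Q x"
    by simp
  also have "\<dots> = (\<Sum>i\<in>A. poly P (t i) * (\<Prod>k\<in>A - {i}. (x - t k) / (t i - t k)))"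
    by (simp add: Q_def poly_sum poly_L)
  finally show ?thesis .
qed

lemma integral_poly_interpolatory:
  fixes t :: "'i \<Rightarrow> real" and P :: "real poly"
  assumes "finite A" "inj_on t A" "degree P < card A"
  shows "integral {a..b} (poly P) =
           (\<Sum>i\<in>A. poly P (t i) * integral {a..b} (\<lambda>x. \<Prod>k\<in>A - {i}. (x - t k) / (t i - t k)))"
proof -
  have "continuous_on {a..b} (\<lambda>x. \<Prod>k\<in>A - {i}. (x - t k) / (t i - t k))" if "i \<in> A" for i
    using that assms(2) by (intro continuous_intros) (auto dest: inj_onD)
  then have integrable: "(\<lambda>x. poly P (t i) * (\<Prod>k\<in>A - {i}. (x - t k) / (t i - t k))) integrable_on {a..b}"
    if "i \<in> A" for i
    using that by (intro integrable_on_mult_right integrable_continuous_interval)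
  have "integral {a..b} (poly P) =
          integral {a..b} (\<lambda>x. \<Sum>i\<in>A. poly P (t i) * (\<Prod>k\<in>A - {i}. (x - t k) / (t i - t k)))"
    by (intro arg_cong[where f = "integral {a..b}"] ext lagrange_interpolation assms)
  also have "\<dots> = (\<Sum>i\<in>A. integral {a..b} (\<lambda>x. poly P (t i) * (\<Prod>k\<in>A - {i}. (x - t k) / (t i - t k))))"
    using integrable by (intro integral_sum assms(1))
  also have "\<dots> = (\<Sum>i\<in>A. poly P (t i) * integral {a..b} (\<lambda>x. \<Prod>k\<in>A - {i}. (x - t k) / (t i - t k)))"
    by simp
  finally show ?thesis .
qed

lemma integral_cos_substitution:
  assumes "continuous_on {-1..1} f"
  shows "integral {0..pi} (\<lambda>\<theta>. f (cos \<theta>) * sin \<theta>) = integral {-1..1} f"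
proof -
  have "((\<lambda>\<theta>. sin \<theta> *\<^sub>R f (- (- cos \<theta>))) has_integral integral {- cos 0..- cos pi} (\<lambda>u. f (- u))) {0..pi}"
  proof (rule has_integral_substitution[where c = "-1" and d = 1])
    show "continuous_on {-1..1} (\<lambda>u. f (- u))"
      by (intro continuous_on_compose2[OF assms]) (auto intro!: continuous_intros)
    show "((\<lambda>\<theta>. - cos \<theta>) has_real_derivative sin \<theta>) (at \<theta> within {0..pi})" for \<theta>
      by (auto intro!: derivative_eq_intros)
  qed auto
  moreover have "integral {-1..1} (\<lambda>u. f (- u)) = integral {-1..1} f"
    using Henstock_Kurzweil_Integration.integral_reflect_real[of 1 "-1" f] by simp
  ultimately show ?thesis
    by (simp add: integral_unique mult.commute)
qed

definition circle_moment :: "nat \<Rightarrow> nat \<Rightarrow> real" where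
  "circle_moment a b = integral {0..2*pi} (\<lambda>\<phi>. cos \<phi> ^ a * sin \<phi> ^ b)"

lemma has_integral_circle_moment:
  "((\<lambda>\<phi>. cos \<phi> ^ a * sin \<phi> ^ b) has_integral circle_moment a b) {0..2*pi}"
  unfolding circle_moment_def
  by (intro integrable_integral integrable_continuous_interval continuous_intros)

text \<open>Only even powers of \<open>sin \<theta>\<close> survive, since the odd moments vanish.\<close>

lemma circle_moment_mult_sin_power:
  "circle_moment a b * sin \<theta> ^ (a + b) =
     circle_moment a b * poly ([:1, 0, -1:] ^ ((a + b) div 2)) (cos \<theta>)"
proof (cases "even (a + b)")
  case True
  then have "sin \<theta> ^ (a + b) = (sin \<theta> ^ 2) ^ ((a + b) div 2)"
    by (simp add: power_mult[symmetric])
  also have "\<dots> = (1 - cos \<theta> ^ 2) ^ ((a + b) div 2)"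
    by (simp add: sin_squared_eq)
  also have "\<dots> = poly ([:1, 0, -1:] ^ ((a + b) div 2)) (cos \<theta>)"
    by (simp add: poly_power power2_eq_square)
  finally show ?thesis
    by simp
next
  case False
  then have "circle_moment a b = 0"
    unfolding circle_moment_def by (intro integral_unique cos_power_mult_sin_power_integral_odd)
  then show ?thesis
    by simp
qed

lemma degree_smult_one_minus_square_power_mult_x_power:
  "degree (smult c ([:1, 0, -1:] ^ k * [:0, 1:] ^ d)) \<le> 2 * k + d"
  by (intro order.trans[OF degree_smult_le] order.trans[OF degree_mult_le] add_mono
      order.trans[OF degree_power_le]) auto

lemma finite_exponent_triples: "finite {(a, b, d :: nat). a + b + d \<le> n}"
  by (rule finite_subset[of _ "{..n} \<times> {..n} \<times> {..n}"]) auto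

lemma sph_eq_sum_monomials:
  assumes "sphere_poly n T"
  obtains c where "\<And>\<theta> \<phi>. sph T \<theta> \<phi> = (\<Sum>(a, b, d) \<in> {(a, b, d). a + b + d \<le> n}.
      c a b d * (sin \<theta> ^ (a + b) * cos \<theta> ^ d) * (cos \<phi> ^ a * sin \<phi> ^ b))"
proof -
  obtain c where c: "\<And>x y z. x\<^sup>2 + y\<^sup>2 + z\<^sup>2 = 1 \<Longrightarrow>
      T x y z = (\<Sum>(a, b, d) \<in> {(a, b, d). a + b + d \<le> n}. c a b d * x ^ a * y ^ b * z ^ d)"
    using assms unfolding sphere_poly_def by blast
  have on_sphere: "(sin \<theta> * cos \<phi>)\<^sup>2 + (sin \<theta> * sin \<phi>)\<^sup>2 + (cos \<theta>)\<^sup>2 = 1" for \<theta> \<phi> :: real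
  proof -
    have "(sin \<theta> * cos \<phi>)\<^sup>2 + (sin \<theta> * sin \<phi>)\<^sup>2 + (cos \<theta>)\<^sup>2 =
            (sin \<theta>)\<^sup>2 * ((cos \<phi>)\<^sup>2 + (sin \<phi>)\<^sup>2) + (cos \<theta>)\<^sup>2"
      by algebra
    then show ?thesis
      by simp
  qed
  have "sph T \<theta> \<phi> = (\<Sum>(a, b, d) \<in> {(a, b, d). a + b + d \<le> n}.
      c a b d * (sin \<theta> ^ (a + b) * cos \<theta> ^ d) * (cos \<phi> ^ a * sin \<phi> ^ b))" for \<theta> \<phi>
    unfolding sph_def c[OF on_sphere] by (intro sum.cong refl) (auto simp: power_mult_distrib power_add)
  then show ?thesis
    using that by blast
qed

lemma sph_equispaced_rule:
  assumes "sphere_poly n T" "n < N"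
  shows "((\<lambda>\<phi>. sph T \<theta> \<phi>) has_integral 2*pi/N * (\<Sum>j<N. sph T \<theta> (s + 2*pi*real j/N))) {0..2*pi}"
proof -
  obtain c where c: "\<And>\<theta> \<phi>. sph T \<theta> \<phi> = (\<Sum>(a, b, d) \<in> {(a, b, d). a + b + d \<le> n}.
      c a b d * (sin \<theta> ^ (a + b) * cos \<theta> ^ d) * (cos \<phi> ^ a * sin \<phi> ^ b))"
    using sph_eq_sum_monomials[OF assms(1)] by blast
  have "((\<lambda>\<phi>. sph T \<theta> \<phi>) has_integral (\<Sum>(a, b, d) \<in> {(a, b, d). a + b + d \<le> n}.
      c a b d * (sin \<theta> ^ (a + b) * cos \<theta> ^ d) *
        (2*pi/N * (\<Sum>j<N. cos (s + 2*pi*real j/N) ^ a * sin (s + 2*pi*real j/N) ^ b)))) {0..2*pi}"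
    unfolding c
  proof (intro has_integral_sum finite_exponent_triples)
    fix i assume "i \<in> {(a, b, d). a + b + d \<le> n}"
    then obtain a b d where i: "i = (a, b, d)" and "a + b < N"
      using assms(2) by auto
    then show "((\<lambda>\<phi>. case i of (a, b, d) \<Rightarrow> c a b d * (sin \<theta> ^ (a + b) * cos \<theta> ^ d) * (cos \<phi> ^ a * sin \<phi> ^ b))
        has_integral (case i of (a, b, d) \<Rightarrow> c a b d * (sin \<theta> ^ (a + b) * cos \<theta> ^ d) *
          (2*pi/N * (\<Sum>j<N. cos (s + 2*pi*real j/N) ^ a * sin (s + 2*pi*real j/N) ^ b)))) {0..2*pi}"
      unfolding i prod.case by (intro has_integral_mult_right cos_power_mult_sin_power_equispaced_rule)
  qed
  also have "(\<Sum>(a, b, d) \<in> {(a, b, d). a + b + d \<le> n}.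
      c a b d * (sin \<theta> ^ (a + b) * cos \<theta> ^ d) *
        (2*pi/N * (\<Sum>j<N. cos (s + 2*pi*real j/N) ^ a * sin (s + 2*pi*real j/N) ^ b))) =
      2*pi/N * (\<Sum>j<N. sph T \<theta> (s + 2*pi*real j/N))"
    unfolding c sum_distrib_left
    by (subst sum.swap) (simp add: split_def mult_ac)
  finally show ?thesis .
qed

lemma sph_azimuthal_integral_poly_cos:
  assumes "sphere_poly n T"
  obtains P :: "real poly"
  where "degree P \<le> n" "\<And>\<theta>. ((\<lambda>\<phi>. sph T \<theta> \<phi>) has_integral poly P (cos \<theta>)) {0..2*pi}"
proof -
  obtain c where c: "\<And>\<theta> \<phi>. sph T \<theta> \<phi> = (\<Sum>(a, b, d) \<in> {(a, b, d). a + b + d \<le> n}.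
      c a b d * (sin \<theta> ^ (a + b) * cos \<theta> ^ d) * (cos \<phi> ^ a * sin \<phi> ^ b))"
    using sph_eq_sum_monomials[OF assms] by blast
  define P where "P = (\<Sum>(a, b, d) \<in> {(a, b, d). a + b + d \<le> n}.
      smult (c a b d * circle_moment a b) ([:1, 0, -1:] ^ ((a + b) div 2) * [:0, 1:] ^ d))"
  have "degree P \<le> n"
    unfolding P_def
  proof (intro degree_sum_le finite_exponent_triples)
    fix i assume "i \<in> {(a, b, d). a + b + d \<le> n}"
    then obtain a b d where i: "i = (a, b, d)" "a + b + d \<le> n"
      by auto
    show "degree (case i of (a, b, d) \<Rightarrow>
        smult (c a b d * circle_moment a b) ([:1, 0, -1:] ^ ((a + b) div 2) * [:0, 1:] ^ d)) \<le> n"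
      unfolding i(1) prod.case
      by (rule order.trans[OF degree_smult_one_minus_square_power_mult_x_power]) (use i(2) in presburger)
  qed
  moreover have "((\<lambda>\<phi>. sph T \<theta> \<phi>) has_integral poly P (cos \<theta>)) {0..2*pi}" for \<theta>
  proof -
    have "((\<lambda>\<phi>. sph T \<theta> \<phi>) has_integral (\<Sum>(a, b, d) \<in> {(a, b, d). a + b + d \<le> n}.
        c a b d * (sin \<theta> ^ (a + b) * cos \<theta> ^ d) * circle_moment a b)) {0..2*pi}"
      unfolding c
      by (intro has_integral_sum finite_exponent_triples)
        (clarsimp intro!: has_integral_mult_right has_integral_circle_moment)
    also have "(\<Sum>(a, b, d) \<in> {(a, b, d). a + b + d \<le> n}.
        c a b d * (sin \<theta> ^ (a + b) * cos \<theta> ^ d) * circle_moment a b) = poly P (cos \<theta>)"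
      unfolding P_def poly_sum
    proof (intro sum.cong refl)
      fix i :: "nat \<times> nat \<times> nat"
      obtain a b d where i: "i = (a, b, d)"
        by (cases i)
      have "c a b d * (sin \<theta> ^ (a + b) * cos \<theta> ^ d) * circle_moment a b =
          c a b d * cos \<theta> ^ d * (circle_moment a b * sin \<theta> ^ (a + b))"
        by (simp add: mult_ac)
      also have "\<dots> = c a b d * cos \<theta> ^ d * (circle_moment a b * poly ([:1, 0, -1:] ^ ((a + b) div 2)) (cos \<theta>))"
        by (simp only: circle_moment_mult_sin_power)
      finally show "(case i of (a, b, d) \<Rightarrow> c a b d * (sin \<theta> ^ (a + b) * cos \<theta> ^ d) * circle_moment a b) =
          poly (case i of (a, b, d) \<Rightarrow>
            smult (c a b d * circle_moment a b) ([:1, 0, -1:] ^ ((a + b) div 2) * [:0, 1:] ^ d)) (cos \<theta>)"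
        unfolding i prod.case by (simp add: poly_monom mult_ac)
    qed
    finally show ?thesis .
  qed
  ultimately show ?thesis
    using that by blast
qed

lemma sph_equispaced_sum_eq_poly_cos:
  assumes "sphere_poly n T" "n < N"
    and "\<And>\<theta>. ((\<lambda>\<phi>. sph T \<theta> \<phi>) has_integral poly P (cos \<theta>)) {0..2*pi}"
  shows "2*pi/N * (\<Sum>j<N. sph T \<theta> ((2 * real j + \<alpha>) * pi / N)) = poly P (cos \<theta>)"
proof -
  have "(2 * real j + \<alpha>) * pi / N = \<alpha> * pi / N + 2*pi*real j/N" for j
    by (simp add: add_divide_distrib algebra_simps)
  then have "((\<lambda>\<phi>. sph T \<theta> \<phi>) has_integral 2*pi/N * (\<Sum>j<N. sph T \<theta> ((2 * real j + \<alpha>) * pi / N)))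
      {0..2*pi}"
    using sph_equispaced_rule[OF assms(1,2), of \<theta> "\<alpha> * pi / N"] by simp
  then show ?thesis
    using assms(3) by (rule has_integral_unique)
qed

lemma inj_on_cos_comp:
  assumes "inj_on \<theta> A" "\<forall>i\<in>A. 0 \<le> \<theta> i \<and> \<theta> i \<le> pi"
  shows "inj_on (\<lambda>i. cos (\<theta> i)) A"
proof (rule inj_onI)
  fix i k assume i: "i \<in> A" and k: "k \<in> A" and "cos (\<theta> i) = cos (\<theta> k)"
  with assms(2) have "\<theta> i = \<theta> k"
    using cos_inj_pi[of "\<theta> i" "\<theta> k"] by simp
  then show "i = k"
    using inj_onD[OF assms(1) _ i k] by simp
qed

lemma sphere_integral_eq_integral_poly:
  assumes "\<And>\<theta>. ((\<lambda>\<phi>. sph T \<theta> \<phi>) has_integral poly P (cos \<theta>)) {0..2*pi}"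
  shows "sphere_integral T = integral {-1..1} (poly P)"
proof -
  have "integral {0..2*pi} (\<lambda>\<phi>. sph T \<theta> \<phi> * sin \<theta>) = poly P (cos \<theta>) * sin \<theta>" for \<theta>
    using has_integral_mult_left[OF assms] by (rule integral_unique)
  then have "sphere_integral T = integral {0..pi} (\<lambda>\<theta>. poly P (cos \<theta>) * sin \<theta>)"
    unfolding sphere_integral_def by (simp only:)
  also have "\<dots> = integral {-1..1} (poly P)"
    by (intro integral_cos_substitution continuous_on_poly continuous_on_id)
  finally show ?thesis .
qed

theorem proposition3p2:
  fixes m :: nat and \<theta> :: "nat \<Rightarrow> real" and T :: "real \<Rightarrow> real \<Rightarrow> real \<Rightarrow> real"
  assumes "m > 0"
    and "\<forall>i\<in>{1..2*m}. 0 < \<theta> i \<and> \<theta> i < pi"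
    and "inj_on \<theta> {1..2*m}"
    and "\<forall>i\<in>{1..m}. \<theta> (2*m + 1 - i) = pi - \<theta> i"
    and "sphere_poly (2*m - 1) T"
  shows "sphere_integral T =
      pi / m * (\<Sum>i=1..m. integral {-1..1} (\<lambda>t. \<Prod>k\<in>{1..2*m} - {i}. (t - cos (\<theta> k)) / (cos (\<theta> i) - cos (\<theta> k)))
                 * (\<Sum>j=0..2*m-1. sph T (\<theta> i) ((2 * real j + 0) * pi / (2 * m))))
    + pi / m * (\<Sum>i=m+1..2*m. integral {-1..1} (\<lambda>t. \<Prod>k\<in>{1..2*m} - {i}. (t - cos (\<theta> k)) / (cos (\<theta> i) - cos (\<theta> k)))
                 * (\<Sum>j=0..2*m-1. sph T (\<theta> i) ((2 * real j + 1) * pi / (2 * m))))"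
proof -
  obtain P where deg_P: "degree P \<le> 2*m - 1"
    and azimuthal: "\<And>\<theta>. ((\<lambda>\<phi>. sph T \<theta> \<phi>) has_integral poly P (cos \<theta>)) {0..2*pi}"
    using sph_azimuthal_integral_poly_cos[OF assms(5)] by blast
  have equispaced: "pi / m * (x * (\<Sum>j=0..2*m-1. sph T \<theta> ((2 * real j + \<alpha>) * pi / (2 * m)))) = poly P (cos \<theta>) * x"
    for \<theta> \<alpha> x
  proof -
    have "{0..2*m-1} = {..<2*m}"
      using assms(1) by auto
    moreover have "2*pi/(2*m) = pi / m"
      by simp
    ultimately have "pi / m * (\<Sum>j=0..2*m-1. sph T \<theta> ((2 * real j + \<alpha>) * pi / (2 * m))) = poly P (cos \<theta>)"
      using sph_equispaced_sum_eq_poly_cos[OF assms(5) _ azimuthal, of "2*m"] assms(1) by (simp only:)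
    then show ?thesis
      by (metis mult.commute mult.left_commute)
  qed
  have inj_cos: "inj_on (\<lambda>k. cos (\<theta> k)) {1..2*m}"
    using assms(2) by (intro inj_on_cos_comp assms(3)) auto
  let ?w = "\<lambda>i. integral {-1..1} (\<lambda>t. \<Prod>k\<in>{1..2*m} - {i}. (t - cos (\<theta> k)) / (cos (\<theta> i) - cos (\<theta> k)))"
  have weighted: "pi / m * (\<Sum>i\<in>I. ?w i * (\<Sum>j=0..2*m-1. sph T (\<theta> i) ((2 * real j + \<alpha>) * pi / (2 * m))))
      = (\<Sum>i\<in>I. poly P (cos (\<theta> i)) * ?w i)" for I \<alpha>
    unfolding sum_distrib_left[of "pi / m"] equispaced ..
  have "sphere_integral T = (\<Sum>i\<in>{1..2*m}. poly P (cos (\<theta> i)) * ?w i)"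
    using deg_P assms(1) sphere_integral_eq_integral_poly[OF azimuthal] inj_cos
    by (simp add: integral_poly_interpolatory)
  also have "\<dots> = (\<Sum>i=1..m. poly P (cos (\<theta> i)) * ?w i) + (\<Sum>i=m+1..2*m. poly P (cos (\<theta> i)) * ?w i)"
    using sum.ub_add_nat[of 1 m _ m] by (simp add: mult_2)
  finally show ?thesis
    unfolding weighted .
qed

end
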